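(* Let $k \ge 1$, $m = 4k+5$, $\theta = 2\pi/m$, and let $P$ be a finite point set in general position. For any two vertices $u, w \in P$, let $M$ be the midpoint of the side of $T_{uw}$ opposite $u$ and let $\alpha$ be the unsigned angle between $uw$ and $uM$. Then the $\theta_m$-graph on $P$ contains a path from $u$ to $w$ of length at most $$\left(\frac{\cos\alpha}{\cos(\theta/2)} + \frac{(\cos\alpha\tan(\theta/2) + \sin\alpha)\cos(\theta/4)}{\cos(\theta/2) - \sin(3\theta/4)}\right)|uw|.$$
   Context: Cones: for $m \ge 2$, $\theta = 2\pi/m$; around each point $u$ draw $m$ rays with consecutive angular separation $\theta$, oriented so the vertical upward ray from $u$ bisects a cone $C_0^u$; cones numbered $C_0^u,\dots,C_{m-1}^u$ clockwise, same orientation at every point. General position: no two points on a line parallel to a cone boundary ray, no two on a line perpendicular to a cone bisector, no three collinear. The $\theta_m$-graph on $P$: for each $u\in P$ and each cone $C_i^u$ containing another point of $P$, add an edge from $u$ to the point of $C_i^u$ whose orthogonal projection onto the bisector of $C_i^u$ is closest to $u$; edges weighted by Euclidean length. Canonical triangle: if $w$ lies in cone $C$ of $u$, $T_{uw}$ is the triangle bounded by the two boundary rays of $C$ and the line through $w$ perpendicular to the bisector of $C$. *)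

theory Defs
  imports "HOL-Analysis.Analysis"
begin

type_synonym point = "real \<times> real"

definition cone_angle :: "nat \<Rightarrow> real" where
  "cone_angle m = 2 * pi / real m"

text \<open>Unit direction at clockwise angle phi measured from the upward vertical.\<close>
definition cw_dir :: "real \<Rightarrow> point" where
  "cw_dir phi = (sin phi, cos phi)"

text \<open>Bisector of cone C_i (cone C_0 bisected by the upward ray, numbered clockwise).\<close>
definition bisector :: "nat \<Rightarrow> nat \<Rightarrow> point" where
  "bisector m i = cw_dir (real i * cone_angle m)"

definition bdry_left :: "nat \<Rightarrow> nat \<Rightarrow> point" where
  "bdry_left m i = cw_dir (real i * cone_angle m - cone_angle m / 2)"
definition bdry_right :: "nat \<Rightarrow> nat \<Rightarrow> point" where
  "bdry_right m i = cw_dir (real i * cone_angle m + cone_angle m / 2)"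

definition in_cone :: "nat \<Rightarrow> point \<Rightarrow> nat \<Rightarrow> point \<Rightarrow> bool" where
  "in_cone m u i v \<longleftrightarrow> i < m \<and> v \<noteq> u \<and>
     (v - u) \<bullet> bisector m i \<ge> norm (v - u) * cos (cone_angle m / 2)"

definition cross :: "point \<Rightarrow> point \<Rightarrow> real" where
  "cross a b = fst a * snd b - snd a * fst b"

definition general_position :: "nat \<Rightarrow> point set \<Rightarrow> bool" where
  "general_position m P \<longleftrightarrow>
     (\<forall>u\<in>P. \<forall>v\<in>P. u \<noteq> v \<longrightarrow> (\<forall>j<m.
         cross (v - u) (bdry_left m j) \<noteq> 0 \<and> cross (v - u) (bdry_right m j) \<noteq> 0 \<and>
         (v - u) \<bullet> bisector m j \<noteq> 0)) \<and>
     (\<forall>u\<in>P. \<forall>v\<in>P. \<forall>w\<in>P. u \<noteq> v \<and> u \<noteq> w \<and> v \<noteq> w \<longrightarrow> cross (v - u) (w - u) \<noteq> 0)"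

definition theta_edge :: "nat \<Rightarrow> point set \<Rightarrow> point \<Rightarrow> point \<Rightarrow> bool" where
  "theta_edge m P u v \<longleftrightarrow> u \<in> P \<and> v \<in> P \<and>
     (\<exists>i<m. in_cone m u i v \<and>
        (\<forall>x\<in>P. in_cone m u i x \<longrightarrow> (v - u) \<bullet> bisector m i \<le> (x - u) \<bullet> bisector m i))"

definition theta_adj :: "nat \<Rightarrow> point set \<Rightarrow> point \<Rightarrow> point \<Rightarrow> bool" where
  "theta_adj m P u v \<longleftrightarrow> theta_edge m P u v \<or> theta_edge m P v u"

fun is_walk :: "(point \<Rightarrow> point \<Rightarrow> bool) \<Rightarrow> point list \<Rightarrow> bool" where
  "is_walk E [] = True"
| "is_walk E [x] = True"
| "is_walk E (x # y # ys) = (E x y \<and> is_walk E (y # ys))"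

fun path_length :: "point list \<Rightarrow> real" where
  "path_length [] = 0"
| "path_length [x] = 0"
| "path_length (x # y # ys) = dist x y + path_length (y # ys)"

definition theta_path :: "nat \<Rightarrow> point set \<Rightarrow> point \<Rightarrow> point \<Rightarrow> point list \<Rightarrow> bool" where
  "theta_path m P u w ps \<longleftrightarrow> ps \<noteq> [] \<and> hd ps = u \<and> last ps = w \<and> set ps \<subseteq> P \<and>
     is_walk (theta_adj m P) ps"

text \<open>Canonical triangle T_uw for w in cone C_i of u: vertices u and the two corners where
  the boundary rays of C_i meet the line through w perpendicular to the bisector.\<close>
definition canon_corner_left :: "nat \<Rightarrow> point \<Rightarrow> nat \<Rightarrow> point \<Rightarrow> point" where
  "canon_corner_left m u i w =
     u + (((w - u) \<bullet> bisector m i) / cos (cone_angle m / 2)) *\<^sub>R bdry_left m i"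
definition canon_corner_right :: "nat \<Rightarrow> point \<Rightarrow> nat \<Rightarrow> point \<Rightarrow> point" where
  "canon_corner_right m u i w =
     u + (((w - u) \<bullet> bisector m i) / cos (cone_angle m / 2)) *\<^sub>R bdry_right m i"

definition canon_triangle :: "nat \<Rightarrow> point \<Rightarrow> nat \<Rightarrow> point \<Rightarrow> point set" where
  "canon_triangle m u i w = convex hull {u, canon_corner_left m u i w, canon_corner_right m u i w}"

definition canon_mid :: "nat \<Rightarrow> point \<Rightarrow> nat \<Rightarrow> point \<Rightarrow> point" where
  "canon_mid m u i w = midpoint (canon_corner_left m u i w) (canon_corner_right m u i w)"

definition uangle :: "point \<Rightarrow> point \<Rightarrow> real" where
  "uangle a b = arccos ((a \<bullet> b) / (norm a * norm b))"

end

theory Submission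
  imports Defs
begin

(* Write theta = 2 pi / m.  For w in cone C_i of u let Y = <w - u, bisector_i> and
   X = <w - u, n_i>, where n_i is the unit normal of the bisector.  The proof is a
   potential argument: with c = cos(theta/4) / (cos(theta/2) - sin(3 theta/4)) and
   K = 1/cos(theta/2) + c tan(theta/2) the potential  Phi(u, i, w) = K Y + c |X|  satisfies
     (a) |uw| <= Phi(u, i, w), and
     (b) if v is the theta-edge neighbour of u in C_i and w lies in cone C_j of v, then
         |uv| + Phi(v, j, w) <= Phi(u, i, w).
   Iterating (b) along the greedy route gives a theta-path from u to w of length at most
   Phi(u, i, w) (well-founded induction over the finitely many potential values), and
   Phi(u, i, w) is exactly the bound of the theorem, since cos alpha = Y/|uw| and
   sin alpha = |X|/|uw|.

   The heart of (b) is a one-dimensional fact: in polar coordinates the potential of a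
   direction at angle psi from a bisector is proportional to K cos psi + c |sin psi|, and
   moving to the cone containing the direction (shifting psi by a multiple of theta into
   [-theta/2, theta/2]) never increases this quantity.  Here m = 4k + 5 enters through the
   identity (k+1) theta = pi/2 - theta/4, and the choice of c and K through
   K cos x + c sin x = const * cos(x - (pi/4 + theta/8)). *)

lemma near_multiple:
  fixes x c :: real
  assumes "0 < c"
  obtains n :: int where "\<bar>x - of_int n * c\<bar> \<le> c / 2"
proof
  define n where "n = \<lfloor>x / c + 1 / 2\<rfloor>"
  have "of_int n \<le> x / c + 1 / 2" "x / c + 1 / 2 < of_int n + 1"
    unfolding n_def by linarith+
  then have "of_int n * c \<le> x + c / 2" "x - c / 2 < of_int n * c"
    using assms by (simp_all add: field_simps)
  then show "\<bar>x - of_int n * c\<bar> \<le> c / 2" by linarith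
qed

lemma cos_sin_shift:
  fixes x :: real and l :: int
  shows "cos (x - 2 * pi * of_int l) = cos x" "sin (x - 2 * pi * of_int l) = sin x"
  by (simp_all add: cos_diff sin_diff)

definition normal_dir :: "real \<Rightarrow> point" where
  "normal_dir a = (cos a, - sin a)"

lemma abs_sin_eq_sin_abs:
  fixes x :: real
  assumes "\<bar>x\<bar> \<le> pi"
  shows "\<bar>sin x\<bar> = sin \<bar>x\<bar>"
  using sin_ge_zero[of x] sin_ge_zero[of "- x"] assms by (cases "x \<ge> 0") auto

lemma polar_form:
  fixes d :: point
  obtains \<Psi> where "d = (norm d * sin \<Psi>, norm d * cos \<Psi>)"
proof (cases "d = 0")
  case True
  then show ?thesis using that[of 0] by (simp add: zero_prod_def)
next
  case False
  obtain d1 d2 where d: "d = (d1, d2)" by (cases d)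
  have "0 < d1\<^sup>2 + d2\<^sup>2" using False unfolding d by (simp add: zero_prod_def sum_power2_gt_zero_iff)
  then have "(d2 / norm d)\<^sup>2 + (d1 / norm d)\<^sup>2 = 1"
    unfolding d by (simp add: norm_Pair power_divide sum_power2_gt_zero_iff flip: add_divide_distrib)
  then obtain t where "d2 / norm d = cos t" "d1 / norm d = sin t"
    by (rule sincos_total_2pi)
  then show ?thesis using False that[of t] unfolding d by (simp add: field_simps)
qed

lemma polar_inner:
  assumes "d = (R * sin \<Psi>, R * cos \<Psi>)"
  shows "d \<bullet> cw_dir a = R * cos (\<Psi> - a)" "d \<bullet> normal_dir a = R * sin (\<Psi> - a)"
  using assms by (simp_all add: cw_dir_def normal_dir_def cos_diff sin_diff algebra_simps)

lemma frame_norm: "(d \<bullet> cw_dir a)\<^sup>2 + (d \<bullet> normal_dir a)\<^sup>2 = (norm d)\<^sup>2"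
proof -
  obtain \<Psi> where d: "d = (norm d * sin \<Psi>, norm d * cos \<Psi>)" by (rule polar_form)
  show ?thesis
    unfolding polar_inner[OF d] power_mult_distrib distrib_left[symmetric] by simp
qed

lemma finite_values_induct:
  fixes f :: "'a \<Rightarrow> 'b::linorder"
  assumes fin: "finite (f ` A)" and "x \<in> A"
    and step: "\<And>x. x \<in> A \<Longrightarrow> (\<And>y. y \<in> A \<Longrightarrow> f y < f x \<Longrightarrow> Q y) \<Longrightarrow> Q x"
  shows "Q x"
proof -
  define rank where "rank x = card {v \<in> f ` A. v < f x}" for x
  have "x \<in> A \<longrightarrow> Q x"
  proof (induction x rule: measure_induct_rule[of rank])
    case (less x)
    have "rank y < rank x" if "y \<in> A" "f y < f x" for y
      unfolding rank_def using that fin by (intro psubset_card_mono) auto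
    then show ?case using less step by blast
  qed
  with \<open>x \<in> A\<close> show ?thesis by blast
qed

lemma theta_path_Cons:
  assumes "theta_path m P v w ps" "u \<in> P" "theta_adj m P u v"
  shows "theta_path m P u w (u # ps) \<and> path_length (u # ps) = dist u v + path_length ps"
proof -
  obtain rest where ps: "ps = v # rest" using assms(1) unfolding theta_path_def by (cases ps) auto
  show ?thesis using assms unfolding theta_path_def ps by auto
qed

lemma nearest_in_cone:
  assumes "finite P" "u \<in> P" "w \<in> P" "in_cone m u i w"
  obtains v where "v \<in> P" "theta_adj m P u v" "in_cone m u i v"
    "(v - u) \<bullet> bisector m i \<le> (w - u) \<bullet> bisector m i"
proof -
  let ?C = "{x \<in> P. in_cone m u i x}"
  have "finite ?C" using assms(1) by simp
  moreover have "?C \<noteq> {}" using assms(3,4) by blast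
  ultimately obtain v where "is_arg_min (\<lambda>x. (x - u) \<bullet> bisector m i) (\<lambda>x. x \<in> ?C) v"
    using ex_is_arg_min_if_finite by blast
  then have v: "v \<in> P" "in_cone m u i v"
    and nearest: "\<forall>x\<in>P. in_cone m u i x \<longrightarrow> (v - u) \<bullet> bisector m i \<le> (x - u) \<bullet> bisector m i"
    unfolding is_arg_min_def by (auto simp: not_less)
  have "i < m" using assms(4) unfolding in_cone_def by simp
  then have "theta_edge m P u v" unfolding theta_edge_def using assms(2) v nearest by blast
  then show ?thesis using that v nearest assms(3,4) unfolding theta_adj_def by blast
qed

lemma canon_mid_offset:
  assumes "cos (cone_angle m / 2) \<noteq> 0"
  shows "canon_mid m u i w - u = ((w - u) \<bullet> bisector m i) *\<^sub>R bisector m i"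
proof -
  let ?c = "cos (cone_angle m / 2)" and ?Y = "(w - u) \<bullet> bisector m i"
  have mid: "midpoint (u + a) (u + b) - u = (1 / 2 :: real) *\<^sub>R (a + b)" for a b :: point
    by (cases u, cases a, cases b) (simp add: midpoint_def field_simps)
  have "bdry_left m i + bdry_right m i = (2 * ?c) *\<^sub>R bisector m i"
    unfolding bdry_left_def bdry_right_def bisector_def cw_dir_def
    by (simp add: sin_add sin_diff cos_add cos_diff algebra_simps)
  then have "canon_mid m u i w - u = (?Y / ?c / 2) *\<^sub>R ((2 * ?c) *\<^sub>R bisector m i)"
    unfolding canon_mid_def canon_corner_left_def canon_corner_right_def mid
    by (simp flip: scaleR_add_right)
  then show ?thesis using assms by simp
qed

definition lateral_coeff :: "nat \<Rightarrow> real" where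
  "lateral_coeff m = cos (cone_angle m / 4) / (cos (cone_angle m / 2) - sin (3 * cone_angle m / 4))"

definition axial_coeff :: "nat \<Rightarrow> real" where
  "axial_coeff m = 1 / cos (cone_angle m / 2) + lateral_coeff m * tan (cone_angle m / 2)"

definition potential :: "nat \<Rightarrow> point \<Rightarrow> nat \<Rightarrow> point \<Rightarrow> real" where
  "potential m u i w = axial_coeff m * ((w - u) \<bullet> bisector m i)
     + lateral_coeff m * \<bar>(w - u) \<bullet> normal_dir (real i * cone_angle m)\<bar>"

locale four_k_plus_five =
  fixes k m :: nat
  assumes m_eq: "m = 4 * k + 5" and k_pos: "k \<ge> 1"
begin

abbreviation \<theta> :: real where "\<theta> \<equiv> cone_angle m"
abbreviation \<kappa> :: real where "\<kappa> \<equiv> axial_coeff m"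
abbreviation \<gamma> :: real where "\<gamma> \<equiv> lateral_coeff m"

lemma theta_pos: "0 < \<theta>"
  and theta_small: "\<theta> \<le> 2 * pi / 9"
  and full_turn: "real m * \<theta> = 2 * pi"
  and quarter_turn: "(real k + 1) * \<theta> = pi / 2 - \<theta> / 4"
proof -
  have m: "real m = 4 * real k + 5" using m_eq by simp
  show "0 < \<theta>" "real m * \<theta> = 2 * pi" unfolding cone_angle_def m by simp_all
  show "\<theta> \<le> 2 * pi / 9" unfolding cone_angle_def m using k_pos by (simp add: divide_simps)
  show "(real k + 1) * \<theta> = pi / 2 - \<theta> / 4" unfolding cone_angle_def m by (simp add: field_simps)
qed

lemma cos_half_pos: "0 < cos (\<theta> / 2)"
  and cos_quarter_pos: "0 < cos (\<theta> / 4)"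
  and denominator_pos: "0 < cos (\<theta> / 2) - sin (3 * \<theta> / 4)"
  and tan_half_nonneg: "0 \<le> tan (\<theta> / 2)"
proof -
  show "0 < cos (\<theta> / 2)" "0 < cos (\<theta> / 4)"
    by (rule cos_gt_zero_pi; use theta_pos theta_small in simp)+
  have "sin (3 * \<theta> / 4) < sin (pi / 2 - \<theta> / 2)"
    by (subst sin_mono_less_eq) (use theta_pos theta_small in auto)
  then show "0 < cos (\<theta> / 2) - sin (3 * \<theta> / 4)" by (simp add: sin_cos_eq)
  show "0 \<le> tan (\<theta> / 2)" using tan_gt_zero[of "\<theta> / 2"] theta_pos theta_small by simp
qed

lemma lateral_pos: "0 < \<gamma>"
  unfolding lateral_coeff_def using cos_quarter_pos denominator_pos by simp

lemma axial_pos: "0 < \<kappa>"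
  unfolding axial_coeff_def using cos_half_pos lateral_pos tan_half_nonneg
  by (simp add: add_pos_nonneg)

(* beta = pi/4 + theta/8 is the phase of the profile K cos x + c sin x: the constants
   satisfy c cos beta = K sin beta. *)
abbreviation \<beta> :: real where "\<beta> \<equiv> pi / 4 + \<theta> / 8"

lemma cos_beta_pos: "0 < cos \<beta>"
  by (rule cos_gt_zero_pi) (use theta_pos theta_small in simp_all)

lemma phase_balance: "\<gamma> * cos \<beta> = \<kappa> * sin \<beta>"
proof -
  have "sin (3 * \<theta> / 4) = sin (\<theta> / 4) * cos (\<theta> / 2) + cos (\<theta> / 4) * sin (\<theta> / 2)"
    using sin_add[of "\<theta> / 4" "\<theta> / 2"] by (simp add: algebra_simps)
  moreover have "\<gamma> * (cos (\<theta> / 2) - sin (3 * \<theta> / 4)) = cos (\<theta> / 4)"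
    unfolding lateral_coeff_def using denominator_pos by simp
  ultimately have "\<gamma> * (1 - sin (\<theta> / 4)) = \<kappa> * cos (\<theta> / 4)"
    unfolding axial_coeff_def tan_def using cos_half_pos by (simp add: field_simps)
  moreover have "1 - sin (\<theta> / 4) = 2 * (cos \<beta>)\<^sup>2"
    using cos_double_cos[of \<beta>] by (simp add: cos_add distrib_left)
  moreover have "cos (\<theta> / 4) = 2 * sin \<beta> * cos \<beta>"
    using sin_double[of \<beta>] by (simp add: sin_add distrib_left)
  ultimately show ?thesis using cos_beta_pos by (simp add: power2_eq_square)
qed

lemma phase_form: "\<kappa> * cos x + \<gamma> * sin x = \<kappa> / cos \<beta> * cos (x - \<beta>)"
proof -
  have "K * cos x + G * sin x = K / cos b * cos (x - b)"
    if "G * cos b = K * sin b" "cos b \<noteq> 0" for K G b :: real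
  proof -
    have "K / cos b * cos (x - b) = K * cos x + (K * sin b) / cos b * sin x"
      using that(2) by (simp add: cos_diff field_simps)
    moreover have "(K * sin b) / cos b = G" using that by (simp add: field_simps)
    ultimately show ?thesis by simp
  qed
  then show ?thesis using phase_balance cos_beta_pos by simp
qed

(* Hence the profile is larger at x than at a whenever 0 <= a <= x and x is no farther
   from beta than a is, i.e. a + x <= 2 beta. *)
lemma phase_mono:
  assumes "0 \<le> a" "a \<le> x" "a + x \<le> pi / 2 + \<theta> / 4"
  shows "\<kappa> * cos a + \<gamma> * sin a \<le> \<kappa> * cos x + \<gamma> * sin x"
proof -
  have "cos \<bar>a - \<beta>\<bar> \<le> cos \<bar>x - \<beta>\<bar>"
    by (subst cos_mono_le_eq) (use assms theta_pos theta_small in auto)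
  then have "cos (a - \<beta>) \<le> cos (x - \<beta>)" by simp
  moreover have "0 < \<kappa> / cos \<beta>" using axial_pos cos_beta_pos by simp
  ultimately show ?thesis unfolding phase_form by (intro mult_left_mono) simp_all
qed

(* Shifting an angle psi of the open right half-plane by a multiple of theta into the
   window [-theta/2, theta/2] moves its absolute value towards beta in the sense of
   phase_mono.  This is the case of a nonnegative shift; the identity
   (k+1) theta = pi/2 - theta/4 bounds the shift by k + 1. *)
lemma angle_shift_bound_nonneg:
  assumes "\<bar>\<psi>\<bar> < pi / 2" "\<phi> = \<psi> - of_int n * \<theta>" "\<bar>\<phi>\<bar> \<le> \<theta> / 2" "n \<ge> 0"
  shows "\<bar>\<phi>\<bar> \<le> \<bar>\<psi>\<bar> \<and> \<bar>\<phi>\<bar> + \<bar>\<psi>\<bar> \<le> pi / 2 + \<theta> / 4"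
proof (cases "n = 0")
  case True
  then show ?thesis using assms theta_pos theta_small by auto
next
  case False
  then have "1 * \<theta> \<le> of_int n * \<theta>"
    using assms(4) theta_pos by (intro mult_right_mono) auto
  then have phi_le_psi: "\<bar>\<phi>\<bar> \<le> \<psi>" using assms by linarith
  have "of_int n * \<theta> < (real k + 7 / 4) * \<theta>"
    using assms quarter_turn by (simp add: algebra_simps)
  then have "real_of_int n < real_of_int (int k + 2)"
    using theta_pos by (simp add: mult_less_cancel_right_pos)
  then have n_le: "n \<le> int k + 1" by (simp only: of_int_less_iff)
  have "\<bar>\<phi>\<bar> + \<psi> \<le> pi / 2 + \<theta> / 4"
  proof (cases "n \<le> int k")
    case True
    then have "of_int n * \<theta> \<le> real k * \<theta>"
      using theta_pos by (intro mult_right_mono) (simp_all flip: of_int_le_iff)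
    moreover have "real k * \<theta> + \<theta> = pi / 2 - \<theta> / 4"
      using quarter_turn by (simp add: algebra_simps)
    ultimately show ?thesis using assms abs_ge_self[of \<phi>] theta_pos by linarith
  next
    case False
    with n_le have "n = int k + 1" by simp
    then have "of_int n * \<theta> = pi / 2 - \<theta> / 4" using quarter_turn by simp
    moreover have "\<psi> < pi / 2" using assms(1) abs_ge_self[of \<psi>] by linarith
    ultimately show ?thesis using assms(2,3) theta_pos by (simp add: abs_if)
  qed
  then show ?thesis using phi_le_psi by simp
qed

lemma angle_shift_bound:
  assumes "\<bar>\<psi>\<bar> < pi / 2" "\<phi> = \<psi> - of_int n * \<theta>" "\<bar>\<phi>\<bar> \<le> \<theta> / 2"
  shows "\<bar>\<phi>\<bar> \<le> \<bar>\<psi>\<bar> \<and> \<bar>\<phi>\<bar> + \<bar>\<psi>\<bar> \<le> pi / 2 + \<theta> / 4"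
proof (cases "n \<ge> 0")
  case True
  then show ?thesis using angle_shift_bound_nonneg assms by blast
next
  case False
  have "\<bar>- \<phi>\<bar> \<le> \<bar>- \<psi>\<bar> \<and> \<bar>- \<phi>\<bar> + \<bar>- \<psi>\<bar> \<le> pi / 2 + \<theta> / 4"
    by (rule angle_shift_bound_nonneg[where n = "- n"])
      (use False assms in \<open>auto simp: abs_minus_commute\<close>)
  then show ?thesis by simp
qed

lemma angle_shift_profile:
  assumes "\<bar>\<psi>\<bar> < pi / 2" "\<phi> = \<psi> - of_int n * \<theta>" "\<bar>\<phi>\<bar> \<le> \<theta> / 2"
  shows "\<kappa> * cos \<phi> + \<gamma> * \<bar>sin \<phi>\<bar> \<le> \<kappa> * cos \<psi> + \<gamma> * \<bar>sin \<psi>\<bar>"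
proof -
  have bound: "\<bar>\<phi>\<bar> \<le> \<bar>\<psi>\<bar> \<and> \<bar>\<phi>\<bar> + \<bar>\<psi>\<bar> \<le> pi / 2 + \<theta> / 4"
    by (rule angle_shift_bound[OF assms])
  then have "\<kappa> * cos \<bar>\<phi>\<bar> + \<gamma> * sin \<bar>\<phi>\<bar> \<le> \<kappa> * cos \<bar>\<psi>\<bar> + \<gamma> * sin \<bar>\<psi>\<bar>"
    by (intro phase_mono) auto
  moreover have "\<bar>\<phi>\<bar> \<le> pi" "\<bar>\<psi>\<bar> \<le> pi" using bound assms(1) by linarith+
  ultimately show ?thesis by (simp add: abs_sin_eq_sin_abs)
qed

lemma cos_window:
  assumes "\<bar>x\<bar> \<le> pi"
  shows "cos (\<theta> / 2) \<le> cos x \<longleftrightarrow> \<bar>x\<bar> \<le> \<theta> / 2"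
proof -
  have "cos (\<theta> / 2) \<le> cos \<bar>x\<bar> \<longleftrightarrow> \<bar>x\<bar> \<le> \<theta> / 2"
    by (rule cos_mono_le_eq) (use assms theta_pos theta_small in auto)
  then show ?thesis by simp
qed

lemma cone_exists:
  assumes "d \<noteq> 0"
  shows "\<exists>j<m. norm d * cos (\<theta> / 2) \<le> d \<bullet> bisector m j"
proof -
  obtain \<Psi> where d: "d = (norm d * sin \<Psi>, norm d * cos \<Psi>)" by (rule polar_form)
  obtain n :: int where n: "\<bar>\<Psi> - of_int n * \<theta>\<bar> \<le> \<theta> / 2"
    using near_multiple theta_pos by blast
  define j where "j = nat (n mod int m)"
  have m_pos: "0 < m" using m_eq by simp
  then have "j < m" unfolding j_def by (simp add: nat_less_iff)
  have "int j = n - int m * (n div int m)"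
    unfolding j_def using m_pos by (simp add: minus_mult_div_eq_mod)
  then have j_real: "real j = of_int n - real m * of_int (n div int m)"
    by (metis of_int_diff of_int_mult of_int_of_nat_eq)
  have "\<Psi> - real j * \<theta> = (\<Psi> - of_int n * \<theta>) - 2 * pi * of_int (- (n div int m))"
    unfolding j_real full_turn[symmetric] by (simp add: algebra_simps)
  then have "cos (\<Psi> - real j * \<theta>) = cos (\<Psi> - of_int n * \<theta>)"
    by (simp only: cos_sin_shift)
  moreover have "cos (\<theta> / 2) \<le> cos (\<Psi> - of_int n * \<theta>)"
    using n theta_pos theta_small by (subst cos_window) auto
  ultimately have "norm d * cos (\<theta> / 2) \<le> d \<bullet> bisector m j"
    unfolding bisector_def polar_inner[OF d] by (simp add: mult_left_mono)
  with \<open>j < m\<close> show ?thesis by blast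
qed

lemma cone_change:
  assumes pos: "0 < d \<bullet> bisector m i" and cone_j: "norm d * cos (\<theta> / 2) \<le> d \<bullet> bisector m j"
  shows "\<kappa> * (d \<bullet> bisector m j) + \<gamma> * \<bar>d \<bullet> normal_dir (real j * \<theta>)\<bar>
       \<le> \<kappa> * (d \<bullet> bisector m i) + \<gamma> * \<bar>d \<bullet> normal_dir (real i * \<theta>)\<bar>"
proof -
  define R where "R = norm d"
  obtain \<Psi> where d: "d = (R * sin \<Psi>, R * cos \<Psi>)" unfolding R_def by (rule polar_form)
  have R_pos: "0 < R" using pos unfolding R_def by auto
  obtain li lj :: int where
    li: "\<bar>(\<Psi> - real i * \<theta>) - of_int li * (2 * pi)\<bar> \<le> 2 * pi / 2" and
    lj: "\<bar>(\<Psi> - real j * \<theta>) - of_int lj * (2 * pi)\<bar> \<le> 2 * pi / 2"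
    using near_multiple[of "2 * pi"] by (metis pi_gt_zero zero_less_mult_iff zero_less_numeral)
  define \<psi> where "\<psi> = \<Psi> - real i * \<theta> - 2 * pi * of_int li"
  define \<phi> where "\<phi> = \<Psi> - real j * \<theta> - 2 * pi * of_int lj"
  have i_coords: "d \<bullet> bisector m i = R * cos \<psi>" "d \<bullet> normal_dir (real i * \<theta>) = R * sin \<psi>"
    unfolding bisector_def polar_inner[OF d] \<psi>_def cos_sin_shift by simp_all
  have j_coords: "d \<bullet> bisector m j = R * cos \<phi>" "d \<bullet> normal_dir (real j * \<theta>) = R * sin \<phi>"
    unfolding bisector_def polar_inner[OF d] \<phi>_def cos_sin_shift by simp_all
  have "cos (pi / 2) < cos \<bar>\<psi>\<bar>" using pos R_pos unfolding i_coords by (simp add: zero_less_mult_iff)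
  then have psi_bound: "\<bar>\<psi>\<bar> < pi / 2"
    using li by (subst (asm) cos_mono_less_eq) (auto simp: \<psi>_def mult.commute)
  have "cos (\<theta> / 2) \<le> cos \<phi>" using cone_j R_pos unfolding j_coords R_def[symmetric] by simp
  then have phi_bound: "\<bar>\<phi>\<bar> \<le> \<theta> / 2"
    using lj by (subst (asm) cos_window) (auto simp: \<phi>_def mult.commute)
  have "\<phi> = \<psi> - of_int (int j - int i + (lj - li) * int m) * \<theta>"
    unfolding \<phi>_def \<psi>_def full_turn[symmetric] by (simp add: algebra_simps)
  from angle_shift_profile[OF psi_bound this phi_bound] R_pos
  have "R * (\<kappa> * cos \<phi> + \<gamma> * \<bar>sin \<phi>\<bar>) \<le> R * (\<kappa> * cos \<psi> + \<gamma> * \<bar>sin \<psi>\<bar>)"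
    by (intro mult_left_mono) auto
  then show ?thesis unfolding i_coords j_coords using R_pos by (simp add: abs_mult algebra_simps)
qed

lemma axial_split: "\<kappa> * y = y / cos (\<theta> / 2) + \<gamma> * (tan (\<theta> / 2) * y)"
  unfolding axial_coeff_def by (simp add: algebra_simps)

lemma cone_bounds:
  assumes "norm d * cos (\<theta> / 2) \<le> d \<bullet> bisector m i"
  shows "0 \<le> d \<bullet> bisector m i"
    and "norm d \<le> (d \<bullet> bisector m i) / cos (\<theta> / 2)"
    and "\<bar>d \<bullet> normal_dir (real i * \<theta>)\<bar> \<le> tan (\<theta> / 2) * (d \<bullet> bisector m i)"
proof -
  let ?c = "cos (\<theta> / 2)" and ?s = "sin (\<theta> / 2)"
  let ?Y = "d \<bullet> bisector m i" and ?X = "d \<bullet> normal_dir (real i * \<theta>)"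
  have Rc: "0 \<le> norm d * ?c" using cos_half_pos by simp
  then show Y_nonneg: "0 \<le> ?Y" using assms by linarith
  show "norm d \<le> ?Y / ?c" using assms cos_half_pos by (simp add: pos_le_divide_eq)
  have frame: "?Y\<^sup>2 + ?X\<^sup>2 = (norm d)\<^sup>2" unfolding bisector_def by (rule frame_norm)
  have "(norm d * ?c)\<^sup>2 \<le> ?Y\<^sup>2" by (rule power_mono[OF assms Rc])
  then have "(?Y\<^sup>2 + ?X\<^sup>2) * ?c\<^sup>2 \<le> ?Y\<^sup>2" unfolding frame by (simp add: power_mult_distrib)
  moreover have "(?Y * ?s)\<^sup>2 = ?Y\<^sup>2 - ?Y\<^sup>2 * ?c\<^sup>2"
    unfolding power_mult_distrib sin_squared_eq by (simp only: right_diff_distrib mult_1_right)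
  moreover have "(?Y\<^sup>2 + ?X\<^sup>2) * ?c\<^sup>2 = ?Y\<^sup>2 * ?c\<^sup>2 + (?X * ?c)\<^sup>2"
    unfolding power_mult_distrib by (rule distrib_right)
  ultimately have "(?X * ?c)\<^sup>2 \<le> (?Y * ?s)\<^sup>2" by linarith
  then have "(\<bar>?X\<bar> * ?c)\<^sup>2 \<le> (?Y * ?s)\<^sup>2" by (simp only: power_mult_distrib power2_abs)
  moreover have "0 \<le> ?Y * ?s"
    using Y_nonneg sin_ge_zero[of "\<theta> / 2"] theta_pos theta_small by simp
  ultimately have "\<bar>?X\<bar> * ?c \<le> ?Y * ?s" by (rule power2_le_imp_le)
  then show "\<bar>?X\<bar> \<le> tan (\<theta> / 2) * ?Y"
    using cos_half_pos by (simp add: tan_def pos_le_divide_eq ac_simps)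
qed

lemma potential_ge_dist:
  assumes "in_cone m u i w"
  shows "norm (w - u) \<le> potential m u i w"
proof -
  let ?Y = "(w - u) \<bullet> bisector m i"
  have cone: "norm (w - u) * cos (\<theta> / 2) \<le> ?Y" using assms unfolding in_cone_def by simp
  note axial_split[of ?Y]
  moreover have "0 \<le> \<gamma> * (tan (\<theta> / 2) * ?Y)"
    using lateral_pos tan_half_nonneg cone_bounds(1)[OF cone] by simp
  moreover have "0 \<le> \<gamma> * \<bar>(w - u) \<bullet> normal_dir (real i * \<theta>)\<bar>" using lateral_pos by simp
  ultimately show ?thesis using cone_bounds(2)[OF cone] unfolding potential_def by linarith
qed

lemma greedy_step:
  assumes cone_v: "in_cone m u i v" and closer: "(v - u) \<bullet> bisector m i < (w - u) \<bullet> bisector m i"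
    and cone_vw: "in_cone m v j w"
  shows "norm (v - u) + potential m v j w \<le> potential m u i w"
proof -
  let ?Yv = "(v - u) \<bullet> bisector m i" and ?Xv = "(v - u) \<bullet> normal_dir (real i * \<theta>)"
  let ?Yw = "(w - u) \<bullet> bisector m i" and ?Xw = "(w - u) \<bullet> normal_dir (real i * \<theta>)"
  have v_cone: "norm (v - u) * cos (\<theta> / 2) \<le> ?Yv" using cone_v unfolding in_cone_def by simp
  have shift: "(w - v) \<bullet> x = (w - u) \<bullet> x - (v - u) \<bullet> x" for x by (simp add: inner_diff_left)
  have "0 < (w - v) \<bullet> bisector m i" unfolding shift using closer by simp
  from cone_change[OF this] cone_vw
  have "potential m v j w \<le> \<kappa> * (?Yw - ?Yv) + \<gamma> * \<bar>?Xw - ?Xv\<bar>"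
    unfolding potential_def in_cone_def shift by simp
  also have "\<dots> \<le> \<kappa> * (?Yw - ?Yv) + \<gamma> * (\<bar>?Xw\<bar> + tan (\<theta> / 2) * ?Yv)"
    using cone_bounds(3)[OF v_cone] lateral_pos by (intro add_left_mono mult_left_mono) auto
  also have "\<dots> = potential m u i w - ?Yv / cos (\<theta> / 2)"
    using axial_split[of ?Yv] unfolding potential_def
    by (simp only: right_diff_distrib distrib_left)
  finally show ?thesis using cone_bounds(2)[OF v_cone] by linarith
qed

(* The greedy hop: the theta-edge of u in the cone containing w either reaches w or
   makes progress in the sense of greedy_step (general position rules out ties). *)
lemma greedy_hop:
  assumes fin: "finite P" and gp: "general_position m P"
    and u: "u \<in> P" and w: "w \<in> P" and cone: "in_cone m u i w"
  obtains v where "v \<in> P" "v \<noteq> u" "theta_adj m P u v"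
    "v = w \<or> (\<exists>j. in_cone m v j w \<and> norm (v - u) + potential m v j w \<le> potential m u i w)"
proof -
  obtain v where v: "v \<in> P" "theta_adj m P u v" "in_cone m u i v"
    and not_farther: "(v - u) \<bullet> bisector m i \<le> (w - u) \<bullet> bisector m i"
    using nearest_in_cone[OF fin u w cone] .
  have "v \<noteq> u" using v(3) unfolding in_cone_def by simp
  moreover have "\<exists>j. in_cone m v j w \<and> norm (v - u) + potential m v j w \<le> potential m u i w"
    if "v \<noteq> w"
  proof -
    have "i < m" using cone unfolding in_cone_def by simp
    then have "(w - v) \<bullet> bisector m i \<noteq> 0"
      using gp v(1) w that unfolding general_position_def by blast
    then have closer: "(v - u) \<bullet> bisector m i < (w - u) \<bullet> bisector m i"
      using not_farther by (simp add: inner_diff_left)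
    have "w - v \<noteq> 0" using that by simp
    then obtain j where "j < m" "norm (w - v) * cos (\<theta> / 2) \<le> (w - v) \<bullet> bisector m j"
      using cone_exists by blast
    then have cone_vw: "in_cone m v j w" unfolding in_cone_def using that by simp
    show ?thesis using greedy_step[OF v(3) closer cone_vw] cone_vw by blast
  qed
  ultimately show ?thesis using that v by blast
qed

theorem greedy_routing:
  assumes fin: "finite P" and gp: "general_position m P"
    and "u \<in> P" "w \<in> P" "in_cone m u i w"
  shows "\<exists>ps. theta_path m P u w ps \<and> path_length ps \<le> potential m u i w"
proof -
  let ?A = "{(u, i, w). u \<in> P \<and> w \<in> P \<and> in_cone m u i w}"
  let ?f = "\<lambda>(u, i, w). potential m u i w"
  let ?Q = "\<lambda>(u, i, w). \<exists>ps. theta_path m P u w ps \<and> path_length ps \<le> potential m u i w"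
  have "?A \<subseteq> P \<times> {..<m} \<times> P" unfolding in_cone_def by auto
  moreover have "finite (P \<times> {..<m} \<times> P)" using fin by simp
  ultimately have "finite ?A" by (rule finite_subset)
  then have "finite (?f ` ?A)" by simp
  moreover have "(u, i, w) \<in> ?A" using assms by simp
  ultimately have "?Q (u, i, w)"
  proof (rule finite_values_induct)
    fix x assume "x \<in> ?A" and IH: "\<And>y. y \<in> ?A \<Longrightarrow> ?f y < ?f x \<Longrightarrow> ?Q y"
    then obtain u i w where x: "x = (u, i, w)" and u: "u \<in> P" and w: "w \<in> P"
      and cone: "in_cone m u i w" by auto
    obtain v where v: "v \<in> P" "v \<noteq> u" "theta_adj m P u v"
      and hop: "v = w \<or> (\<exists>j. in_cone m v j w \<and> norm (v - u) + potential m v j w \<le> potential m u i w)"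
      using greedy_hop[OF fin gp u w cone] .
    show "?Q x"
    proof (cases "v = w")
      case True
      then have "theta_path m P u w [u, w]" unfolding theta_path_def using u w v(3) by simp
      moreover have "path_length [u, w] \<le> potential m u i w"
        using potential_ge_dist[OF cone] by (simp add: dist_norm norm_minus_commute)
      ultimately show ?thesis unfolding x by auto
    next
      case False
      then obtain j where cone_vw: "in_cone m v j w"
        and decrease: "norm (v - u) + potential m v j w \<le> potential m u i w" using hop by blast
      have "0 < norm (v - u)" using v(2) by simp
      then have "potential m v j w < potential m u i w" using decrease by linarith
      then obtain ps where ps: "theta_path m P v w ps" "path_length ps \<le> potential m v j w"
        using IH[of "(v, j, w)"] v(1) w cone_vw unfolding x by auto
      have "theta_path m P u w (u # ps)" "path_length (u # ps) = norm (v - u) + path_length ps"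
        using theta_path_Cons[OF ps(1) u v(3)] by (simp_all add: dist_norm norm_minus_commute)
      then show ?thesis using ps(2) decrease unfolding x by auto
    qed
  qed
  then show ?thesis by simp
qed

lemma apex_angle:
  assumes "in_cone m u i w"
  defines "\<alpha> \<equiv> uangle (w - u) (canon_mid m u i w - u)"
  shows "cos \<alpha> = ((w - u) \<bullet> bisector m i) / dist u w"
    and "sin \<alpha> = \<bar>(w - u) \<bullet> normal_dir (real i * \<theta>)\<bar> / dist u w"
proof -
  let ?Y = "(w - u) \<bullet> bisector m i" and ?X = "(w - u) \<bullet> normal_dir (real i * \<theta>)"
  have N: "dist u w = norm (w - u)" by (simp add: dist_norm norm_minus_commute)
  have N_pos: "0 < dist u w" using assms(1) unfolding in_cone_def by auto
  have cone: "norm (w - u) * cos (\<theta> / 2) \<le> ?Y" using assms(1) unfolding in_cone_def by simp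
  then have Y_pos: "0 < ?Y" using N_pos cos_half_pos N by (metis mult_pos_pos order_less_le_trans)
  have unit: "norm (bisector m i) = 1" unfolding bisector_def cw_dir_def by (simp add: norm_Pair)
  have M: "canon_mid m u i w - u = ?Y *\<^sub>R bisector m i"
    using canon_mid_offset cos_half_pos by simp
  have "(w - u) \<bullet> (canon_mid m u i w - u) = ?Y * ?Y" unfolding M by simp
  moreover have "norm (canon_mid m u i w - u) = ?Y" unfolding M using unit Y_pos by simp
  ultimately have \<alpha>: "\<alpha> = arccos (?Y / dist u w)"
    unfolding \<alpha>_def uangle_def N using Y_pos by simp
  have frame: "?Y\<^sup>2 + ?X\<^sup>2 = (dist u w)\<^sup>2" unfolding bisector_def N by (rule frame_norm)
  then have "?Y\<^sup>2 \<le> (dist u w)\<^sup>2" using zero_le_power2[of ?X] by linarith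
  then have "?Y \<le> dist u w" by (rule power2_le_imp_le) simp
  then have q: "0 \<le> ?Y / dist u w" "?Y / dist u w \<le> 1" using Y_pos N_pos by simp_all
  then show "cos \<alpha> = ?Y / dist u w" unfolding \<alpha> by (simp add: cos_arccos)
  have "1 - (?Y / dist u w)\<^sup>2 = (?X / dist u w)\<^sup>2"
    using frame N_pos by (simp add: power_divide field_simps)
  then show "sin \<alpha> = \<bar>?X\<bar> / dist u w" unfolding \<alpha> using q N_pos by (simp add: sin_arccos)
qed

lemma potential_closed_form:
  assumes "in_cone m u i w"
  defines "\<alpha> \<equiv> uangle (w - u) (canon_mid m u i w - u)"
  shows "potential m u i w = (cos \<alpha> / cos (\<theta> / 2)
           + (cos \<alpha> * tan (\<theta> / 2) + sin \<alpha>) * cos (\<theta> / 4)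
             / (cos (\<theta> / 2) - sin (3 * \<theta> / 4))) * dist u w"
proof -
  have N_pos: "0 < dist u w" using assms(1) unfolding in_cone_def by auto
  have scale: "(y / n / c + (y / n * t + x / n) * g / D) * n = (1 / c + g / D * t) * y + g / D * x"
    if "n \<noteq> 0" "c \<noteq> 0" "D \<noteq> 0" for y x n c t g D :: real
    using that by (simp add: field_simps)
  show ?thesis
    unfolding potential_def axial_coeff_def lateral_coeff_def apex_angle[OF assms(1), folded \<alpha>_def]
    using N_pos cos_half_pos denominator_pos by (subst scale) auto
qed

end

theorem mainTheorem12:
  fixes k m :: nat and P :: "point set" and u w :: point and i :: nat
  assumes "k \<ge> 1" and "m = 4 * k + 5"
    and "finite P" and "general_position m P"
    and "u \<in> P" and "w \<in> P" and "u \<noteq> w"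
    and "in_cone m u i w"
  shows "let \<theta> = cone_angle m;
             \<alpha> = uangle (w - u) (canon_mid m u i w - u)
         in \<exists>ps. theta_path m P u w ps \<and>
              path_length ps \<le> (cos \<alpha> / cos (\<theta> / 2)
                 + (cos \<alpha> * tan (\<theta> / 2) + sin \<alpha>) * cos (\<theta> / 4)
                   / (cos (\<theta> / 2) - sin (3 * \<theta> / 4))) * dist u w"
proof -
  interpret four_k_plus_five k m using assms(1,2) by unfold_locales
  obtain ps where "theta_path m P u w ps" "path_length ps \<le> potential m u i w"
    using greedy_routing[OF assms(3-6,8)] by blast
  then show ?thesis unfolding Let_def potential_closed_form[OF assms(8)] by blast
qed

end
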